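(* Let $G=(V,E)$ be a finite connected simple graph with vertex-weight $m_0\colon V\to\mathbb{R}_{>0}$ and distance parameter $d\colon E\to\mathbb{R}_{>0}$; set $M=\sum_{u\in V}m_0(u)$, $D^2=\sum_{uv\in E}d(uv)^2$. Then $$\delta(G,m_0,d)\ \ge\ 1-\frac{D^2/M}{\sigma(G,m_0,d)}.$$ Equality holds if and only if there exist an edge-weight $m_1\colon E\to\mathbb{R}_{\ge0}$ (with $(V,\{uv: m_1(uv)>0\})$ connected and $\sum_{uv\in E}m_1(uv)d(uv)^2=D^2$) and a map $\varphi\colon V\to\mathbb{R}^{|V|}$ satisfying $\sum_{u\in V}m_0(u)\|\varphi(u)\|^2=M$ and $\|\varphi(u)-\varphi(v)\|\le d(uv)$ for all $uv\in E$, such that (i) $m_1(uv)\big(d(uv)^2-\|\varphi(u)-\varphi(v)\|^2\big)=0$ for all $uv\in E$, and (ii) $\Delta_{(m_0,m_1)}\varphi=\lambda_1(G,(m_0,m_1))(\varphi-\mathrm{bar}(\varphi))$ (componentwise).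
   Context: Edges are unordered pairs; $v\sim u$ means $uv\in E$; $\|\cdot\|$ is the Euclidean norm. $\mathrm{bar}(\varphi)=\frac1M\sum_u m_0(u)\varphi(u)$. $\delta(G,m_0,d)=\inf\|\mathrm{bar}(\varphi)\|^2$ over all $\varphi\colon V\to\mathbb{R}^{|V|}$ with $\sum_u m_0(u)\|\varphi(u)\|^2=M$ and $\|\varphi(u)-\varphi(v)\|\le d(uv)$ for all $uv\in E$. For an edge-weight $m_1\colon E\to\mathbb{R}_{\ge0}$, $(\Delta_{(m_0,m_1)}f)(u)=\frac{1}{m_0(u)}\big[(\sum_{v\sim u}m_1(uv))f(u)-\sum_{v\sim u}m_1(uv)f(v)\big]$ for $f\colon V\to\mathbb{R}$, and (when $(V,\{uv:m_1(uv)>0\})$ is connected) $\lambda_1(G,(m_0,m_1))$ is its smallest positive eigenvalue, equivalently $\inf_f\frac{\sum_{uv}m_1(uv)(f(u)-f(v))^2}{\sum_u m_0(u)(f(u)-\bar f)^2}$ over nonconstant $f$, $\bar f=\frac1M\sum_u m_0(u)f(u)$. $\sigma(G,m_0,d)=\sup_{m_1}\lambda_1(G,(m_0,m_1))$ over all edge-weights $m_1$ with $(V,\{uv:m_1(uv)>0\})$ connected and $\sum_{uv\in E}m_1(uv)d(uv)^2=D^2$. *)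

theory Defs
  imports "HOL-Analysis.Analysis"
begin

text \<open>Vertices are the elements of a finite type 'v (so V = UNIV and
  R^{|V|} is rendered as real^'v).  Edges are unordered pairs, i.e. two-element
  sets of vertices; edge functions (d, m1) have type 'v set => real.\<close>

definition simple_graph :: "'v set set \<Rightarrow> bool" where
  "simple_graph E \<longleftrightarrow> (\<forall>e\<in>E. card e = 2)"

definition edge_rel :: "'v set set \<Rightarrow> ('v \<times> 'v) set" where
  "edge_rel E = {(x, y). {x, y} \<in> E}"

definition graph_connected :: "'v set set \<Rightarrow> bool" where
  "graph_connected E \<longleftrightarrow> (\<forall>u v. (u, v) \<in> (edge_rel E)\<^sup>*)"

definition support_edges :: "'v set set \<Rightarrow> ('v set \<Rightarrow> real) \<Rightarrow> 'v set set" where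
  "support_edges E m1 = {e \<in> E. m1 e > 0}"

definition total_mass :: "('v::finite \<Rightarrow> real) \<Rightarrow> real" where
  "total_mass m0 = (\<Sum>u\<in>UNIV. m0 u)"

definition Dsq :: "'v set set \<Rightarrow> ('v set \<Rightarrow> real) \<Rightarrow> real" where
  "Dsq E d = (\<Sum>e\<in>E. (d e)\<^sup>2)"

definition bar :: "('v::finite \<Rightarrow> real) \<Rightarrow> ('v \<Rightarrow> 'w::real_vector) \<Rightarrow> 'w" where
  "bar m0 \<phi> = (1 / total_mass m0) *\<^sub>R (\<Sum>u\<in>UNIV. m0 u *\<^sub>R \<phi> u)"

definition laplacian ::
  "'v set set \<Rightarrow> ('v \<Rightarrow> real) \<Rightarrow> ('v set \<Rightarrow> real) \<Rightarrow> ('v \<Rightarrow> 'w::real_vector) \<Rightarrow> 'v \<Rightarrow> 'w" where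
  "laplacian E m0 m1 f u =
     (1 / m0 u) *\<^sub>R ((\<Sum>v\<in>{v. {u, v} \<in> E}. m1 {u, v}) *\<^sub>R f u
                       - (\<Sum>v\<in>{v. {u, v} \<in> E}. m1 {u, v} *\<^sub>R f v))"

definition lambda1 :: "'v set set \<Rightarrow> ('v \<Rightarrow> real) \<Rightarrow> ('v set \<Rightarrow> real) \<Rightarrow> real" where
  "lambda1 E m0 m1 = Inf {ev. ev > 0 \<and>
      (\<exists>f::'v \<Rightarrow> real. f \<noteq> (\<lambda>_. 0) \<and> laplacian E m0 m1 f = (\<lambda>u. ev * f u))}"

definition admissible_map ::
  "'v set set \<Rightarrow> ('v::finite \<Rightarrow> real) \<Rightarrow> ('v set \<Rightarrow> real) \<Rightarrow> ('v \<Rightarrow> real^'v) \<Rightarrow> bool" where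
  "admissible_map E m0 d \<phi> \<longleftrightarrow>
     (\<Sum>u\<in>UNIV. m0 u * (norm (\<phi> u))\<^sup>2) = total_mass m0 \<and>
     (\<forall>u v. {u, v} \<in> E \<longrightarrow> norm (\<phi> u - \<phi> v) \<le> d {u, v})"

definition delta :: "'v set set \<Rightarrow> ('v::finite \<Rightarrow> real) \<Rightarrow> ('v set \<Rightarrow> real) \<Rightarrow> real" where
  "delta E m0 d = Inf {(norm (bar m0 \<phi>))\<^sup>2 | \<phi>. admissible_map E m0 d \<phi>}"

definition admissible_weight ::
  "'v set set \<Rightarrow> ('v set \<Rightarrow> real) \<Rightarrow> ('v set \<Rightarrow> real) \<Rightarrow> bool" where
  "admissible_weight E d m1 \<longleftrightarrow>
     (\<forall>e\<in>E. m1 e \<ge> 0) \<and> graph_connected (support_edges E m1) \<and>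
     (\<Sum>e\<in>E. m1 e * (d e)\<^sup>2) = Dsq E d"

definition sigma :: "'v set set \<Rightarrow> ('v::finite \<Rightarrow> real) \<Rightarrow> ('v set \<Rightarrow> real) \<Rightarrow> real" where
  "sigma E m0 d = Sup {lambda1 E m0 m1 | m1. admissible_weight E d m1}"

end

(* For an admissible edge weight m1 and an admissible map phi, apply the Rayleigh inequality
   for lambda1(m1) to every coordinate of phi - bar(phi) and sum over the coordinates:
     lambda1(m1) M (1 - |bar phi|^2) <= 1/2 sum_(u,v) m1(uv) |phi u - phi v|^2
                                     <= sum_e m1(e) d(e)^2 = D^2,
   the second step because |phi u - phi v| <= d(uv).  The supremum over m1 turns this into
   1 - |bar phi|^2 <= D^2 / (M sigma) for every admissible phi, which is the inequality.
   Both extremal problems are attained by compactness; for sigma, a gap lambda1 >= c > 0 forces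
   the support of a limit weight to be connected.  Hence equality holds iff for some m1 and phi
   both estimates are equalities: the second one is condition (i), and the first one says that
   every centred coordinate of phi minimises the Rayleigh quotient of m1, i.e. is an eigenfunction
   for lambda1(m1), which is condition (ii). *)

theory Submission
  imports Defs
begin

definition extremal_pair ::
  "'v set set \<Rightarrow> ('v::finite \<Rightarrow> real) \<Rightarrow> ('v set \<Rightarrow> real) \<Rightarrow> ('v set \<Rightarrow> real) \<Rightarrow> ('v \<Rightarrow> real ^ 'v) \<Rightarrow> bool"
where
  "extremal_pair E m0 d m1 \<phi> \<longleftrightarrow>
     admissible_weight E d m1 \<and> admissible_map E m0 d \<phi> \<and>
     (\<forall>u v. {u, v} \<in> E \<longrightarrow> m1 {u, v} * ((d {u, v})\<^sup>2 - (norm (\<phi> u - \<phi> v))\<^sup>2) = 0) \<and>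
     (\<forall>u. laplacian E m0 m1 \<phi> u = lambda1 E m0 m1 *\<^sub>R (\<phi> u - bar m0 \<phi>))"

lemma quadratic_nonneg_imp_linear_coeff_0:
  fixes b c :: real
  assumes "\<And>t. 0 \<le> b * t + c * t\<^sup>2"
  shows "b = 0"
proof -
  define s where "s = \<bar>c\<bar> + 1"
  have "s > 0" by (simp add: s_def add.commute add_pos_nonneg)
  have "b * (- b / s) + c * (- b / s)\<^sup>2 = b\<^sup>2 * (c - s) / s\<^sup>2"
    using \<open>s > 0\<close> by (simp add: power2_eq_square field_simps)
  then have "0 \<le> b\<^sup>2 * (c - s)"
    using assms[of "- b / s"] \<open>s > 0\<close> by (simp add: zero_le_divide_iff)
  moreover have "c - s < 0" by (simp add: s_def)
  ultimately have "b\<^sup>2 \<le> 0"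
    by (simp add: zero_le_mult_iff)
  then show ?thesis by simp
qed

lemma power2_norm_vec: "(norm (x :: 'a::real_normed_vector ^ 'n))\<^sup>2 = (\<Sum>i\<in>UNIV. (norm (x $ i))\<^sup>2)"
  by (simp add: norm_vec_def L2_set_def sum_nonneg)

section \<open>Dirichlet energy of a vertex-weighted graph\<close>

locale vertex_weighted_graph =
  fixes E :: "'v::finite set set" and m0 :: "'v \<Rightarrow> real"
  assumes simple: "simple_graph E" and m0_pos: "\<And>u. 0 < m0 u"
begin

definition adj :: "('v set \<Rightarrow> real) \<Rightarrow> 'v \<Rightarrow> 'v \<Rightarrow> real" where
  "adj m1 u v = (if {u, v} \<in> E then m1 {u, v} else 0)"

definition energy_form :: "('v set \<Rightarrow> real) \<Rightarrow> ('v \<Rightarrow> real) \<Rightarrow> ('v \<Rightarrow> real) \<Rightarrow> real" where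
  "energy_form m1 f g = (\<Sum>u\<in>UNIV. \<Sum>v\<in>UNIV. adj m1 u v * (f u - f v) * (g u - g v)) / 2"

definition energy :: "('v set \<Rightarrow> real) \<Rightarrow> ('v \<Rightarrow> real) \<Rightarrow> real" where
  "energy m1 f = (\<Sum>u\<in>UNIV. \<Sum>v\<in>UNIV. adj m1 u v * (f u - f v)\<^sup>2) / 2"

definition winner :: "('v \<Rightarrow> real) \<Rightarrow> ('v \<Rightarrow> real) \<Rightarrow> real" where
  "winner f g = (\<Sum>u\<in>UNIV. m0 u * f u * g u)"

definition wnorm_sq :: "('v \<Rightarrow> real) \<Rightarrow> real" where
  "wnorm_sq f = (\<Sum>u\<in>UNIV. m0 u * (f u)\<^sup>2)"

definition mean_zero :: "('v \<Rightarrow> real) \<Rightarrow> bool" where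
  "mean_zero f \<longleftrightarrow> (\<Sum>u\<in>UNIV. m0 u * f u) = 0"

lemma adj_commute: "adj m1 u v = adj m1 v u"
  by (simp add: adj_def insert_commute)

lemma adj_nonneg: "\<forall>e\<in>E. 0 \<le> m1 e \<Longrightarrow> 0 \<le> adj m1 u v"
  by (simp add: adj_def)

lemma total_mass_pos: "0 < total_mass m0"
  unfolding total_mass_def using m0_pos by (simp add: sum_pos)

lemma bar_real: "bar m0 f = (\<Sum>u\<in>UNIV. m0 u * f u) / total_mass m0"
  by (simp add: bar_def)

lemma laplacian_adj:
  "laplacian E m0 m1 f u = (1 / m0 u) *\<^sub>R (\<Sum>v\<in>UNIV. adj m1 u v *\<^sub>R (f u - f v))"
proof -
  have "(\<Sum>v\<in>UNIV. adj m1 u v *\<^sub>R (f u - f v)) = (\<Sum>v\<in>{v. {u, v} \<in> E}. m1 {u, v} *\<^sub>R (f u - f v))"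
    using sum.inter_filter[of UNIV "\<lambda>v. m1 {u, v} *\<^sub>R (f u - f v)" "\<lambda>v. {u, v} \<in> E"]
    by (simp add: adj_def if_distrib[where f="\<lambda>c. c *\<^sub>R _"] cong: if_cong)
  also have "\<dots> = (\<Sum>v\<in>{v. {u, v} \<in> E}. m1 {u, v}) *\<^sub>R f u - (\<Sum>v\<in>{v. {u, v} \<in> E}. m1 {u, v} *\<^sub>R f v)"
    by (simp add: scaleR_diff_right sum_subtractf scaleR_sum_left)
  finally show ?thesis unfolding laplacian_def by simp
qed

lemma laplacian_real:
  "laplacian E m0 m1 (f :: 'v \<Rightarrow> real) u = (\<Sum>v\<in>UNIV. adj m1 u v * (f u - f v)) / m0 u"
  by (simp add: laplacian_adj)

lemma laplacian_diff_const: "laplacian E m0 m1 (\<lambda>u. f u - c) = laplacian E m0 m1 (f :: 'v \<Rightarrow> real)"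
  by (rule ext) (simp add: laplacian_real)

lemma winner_laplacian: "winner (laplacian E m0 m1 f) g = energy_form m1 f g"
proof -
  define X where "X = (\<Sum>u\<in>UNIV. \<Sum>v\<in>UNIV. adj m1 u v * (f u - f v) * g u)"
  have lhs: "winner (laplacian E m0 m1 f) g = X"
    using m0_pos by (simp add: X_def winner_def laplacian_real sum_distrib_right less_imp_neq[symmetric])
  have "X = (\<Sum>v\<in>UNIV. \<Sum>u\<in>UNIV. adj m1 u v * (f u - f v) * g u)"
    unfolding X_def by (rule sum.swap)
  also have "\<dots> = - (\<Sum>u\<in>UNIV. \<Sum>v\<in>UNIV. adj m1 u v * (f u - f v) * g v)"
    by (simp add: adj_commute sum_negf[symmetric] algebra_simps)
  finally have swapped: "X = - (\<Sum>u\<in>UNIV. \<Sum>v\<in>UNIV. adj m1 u v * (f u - f v) * g v)" .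
  have "(\<Sum>u\<in>UNIV. \<Sum>v\<in>UNIV. adj m1 u v * (f u - f v) * (g u - g v))
      = X - (\<Sum>u\<in>UNIV. \<Sum>v\<in>UNIV. adj m1 u v * (f u - f v) * g v)"
    unfolding X_def sum_subtractf[symmetric] by (intro sum.cong refl) (simp add: algebra_simps)
  then show ?thesis
    using lhs swapped by (simp add: energy_form_def)
qed

lemma energy_form_self: "energy_form m1 f f = energy m1 f"
  unfolding energy_def energy_form_def by (simp add: power2_eq_square mult.assoc)

lemma energy_form_diff_const: "energy_form m1 f (\<lambda>u. g u - c) = energy_form m1 f g"
  by (simp add: energy_form_def)

lemma energy_diff_const: "energy m1 (\<lambda>u. f u - c) = energy m1 f"
  by (simp add: energy_def)

lemma energy_scale: "energy m1 (\<lambda>u. c * f u) = c\<^sup>2 * energy m1 f"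
proof -
  have "energy m1 (\<lambda>u. c * f u) = (\<Sum>u\<in>UNIV. \<Sum>v\<in>UNIV. c\<^sup>2 * (adj m1 u v * (f u - f v)\<^sup>2)) / 2"
    unfolding energy_def by (intro arg_cong[where f="\<lambda>x. x / 2"] sum.cong refl)
      (simp add: power2_eq_square algebra_simps)
  then show ?thesis by (simp add: energy_def sum_distrib_left[symmetric])
qed

lemma energy_add_scaled:
  "energy m1 (\<lambda>u. f u + t * g u) = energy m1 f + 2 * t * energy_form m1 f g + t\<^sup>2 * energy m1 g"
proof -
  have "(\<Sum>u\<in>UNIV. \<Sum>v\<in>UNIV. adj m1 u v * ((f u + t * g u) - (f v + t * g v))\<^sup>2)
      = (\<Sum>u\<in>UNIV. \<Sum>v\<in>UNIV. adj m1 u v * (f u - f v)\<^sup>2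
           + 2 * t * (adj m1 u v * (f u - f v) * (g u - g v)) + t\<^sup>2 * (adj m1 u v * (g u - g v)\<^sup>2))"
    by (intro sum.cong refl) (simp add: power2_eq_square algebra_simps)
  then show ?thesis
    by (simp add: energy_def energy_form_def sum.distrib sum_distrib_left add_divide_distrib)
qed

lemma energy_nonneg: "\<forall>e\<in>E. 0 \<le> m1 e \<Longrightarrow> 0 \<le> energy m1 f"
  unfolding energy_def by (intro divide_nonneg_pos sum_nonneg mult_nonneg_nonneg adj_nonneg) auto

lemma energy_eq_0_imp_const:
  assumes nonneg: "\<forall>e\<in>E. 0 \<le> m1 e" and connected: "graph_connected (support_edges E m1)"
    and "energy m1 f = 0"
  shows "f u = f v"
proof -
  have terms_nonneg: "0 \<le> adj m1 x y * (f x - f y)\<^sup>2" for x y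
    using adj_nonneg[OF nonneg] by simp
  have "(\<Sum>x\<in>UNIV. \<Sum>y\<in>UNIV. adj m1 x y * (f x - f y)\<^sup>2) = 0"
    using assms(3) by (simp add: energy_def)
  then have zero: "adj m1 x y * (f x - f y)\<^sup>2 = 0" for x y
    by (simp add: sum_nonneg_eq_0_iff sum_nonneg terms_nonneg)
  have edge: "f x = f y" if "(x, y) \<in> edge_rel (support_edges E m1)" for x y
    using that zero[of x y] by (simp add: edge_rel_def support_edges_def adj_def)
  have "(u, v) \<in> (edge_rel (support_edges E m1))\<^sup>*"
    using connected by (simp add: graph_connected_def)
  then show ?thesis
    by (induction rule: rtrancl_induct) (auto dest: edge)
qed

lemma sum_m0_laplacian: "(\<Sum>u\<in>UNIV. m0 u * laplacian E m0 m1 f u) = 0"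
  using winner_laplacian[of m1 f "\<lambda>_. 1"] by (simp add: winner_def energy_form_def)

lemma winner_self: "winner f f = wnorm_sq f"
  by (simp add: winner_def wnorm_sq_def power2_eq_square mult.assoc)

lemma wnorm_sq_nonneg: "0 \<le> wnorm_sq f"
  unfolding wnorm_sq_def using m0_pos by (intro sum_nonneg) (simp add: less_imp_le)

lemma wnorm_sq_eq_0_iff: "wnorm_sq f = 0 \<longleftrightarrow> f = (\<lambda>_. 0)"
  using m0_pos by (simp add: wnorm_sq_def sum_nonneg_eq_0_iff less_imp_le less_imp_neq[symmetric]
      fun_eq_iff)

lemma wnorm_sq_scale: "wnorm_sq (\<lambda>u. c * f u) = c\<^sup>2 * wnorm_sq f"
  unfolding wnorm_sq_def by (simp add: sum_distrib_left power_mult_distrib algebra_simps)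

lemma wnorm_sq_add_scaled:
  "wnorm_sq (\<lambda>u. f u + t * g u) = wnorm_sq f + 2 * t * winner f g + t\<^sup>2 * wnorm_sq g"
proof -
  have "wnorm_sq (\<lambda>u. f u + t * g u)
      = (\<Sum>u\<in>UNIV. m0 u * (f u)\<^sup>2 + 2 * t * (m0 u * f u * g u) + t\<^sup>2 * (m0 u * (g u)\<^sup>2))"
    unfolding wnorm_sq_def by (intro sum.cong refl) (simp add: power2_eq_square algebra_simps)
  then show ?thesis by (simp add: sum.distrib sum_distrib_left wnorm_sq_def winner_def)
qed

lemma mean_zero_scale: "mean_zero f \<Longrightarrow> mean_zero (\<lambda>u. c * f u)"
  unfolding mean_zero_def by (simp add: sum_distrib_left[symmetric] algebra_simps)

lemma mean_zero_add_scaled: "mean_zero f \<Longrightarrow> mean_zero g \<Longrightarrow> mean_zero (\<lambda>u. f u + t * g u)"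
  unfolding mean_zero_def by (simp add: sum.distrib algebra_simps sum_distrib_left[symmetric])

lemma mean_zero_centered: "mean_zero (\<lambda>u. f u - bar m0 f)"
proof -
  have "(\<Sum>u\<in>UNIV. m0 u * (f u - bar m0 f)) = (\<Sum>u\<in>UNIV. m0 u * f u) - total_mass m0 * bar m0 f"
    by (simp add: right_diff_distrib sum_subtractf sum_distrib_right[symmetric] total_mass_def)
  then show ?thesis
    using total_mass_pos by (simp add: mean_zero_def bar_real)
qed

lemma wnorm_sq_centered:
  "wnorm_sq (\<lambda>u. f u - bar m0 f) = wnorm_sq f - total_mass m0 * (bar m0 f)\<^sup>2"
proof -
  define c where "c = bar m0 f"
  have sum_eq: "(\<Sum>u\<in>UNIV. m0 u * f u) = total_mass m0 * c"
    using total_mass_pos by (simp add: bar_real c_def)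
  have "wnorm_sq (\<lambda>u. f u - c) = (\<Sum>u\<in>UNIV. m0 u * (f u)\<^sup>2 - 2 * c * (m0 u * f u) + c\<^sup>2 * m0 u)"
    unfolding wnorm_sq_def by (intro sum.cong refl) (simp add: power2_eq_square algebra_simps)
  also have "\<dots> = wnorm_sq f - 2 * c * (\<Sum>u\<in>UNIV. m0 u * f u) + c\<^sup>2 * total_mass m0"
    by (simp add: wnorm_sq_def sum.distrib sum_subtractf sum_distrib_left total_mass_def)
  also have "\<dots> = wnorm_sq f - total_mass m0 * c\<^sup>2"
    unfolding sum_eq by (simp add: power2_eq_square algebra_simps)
  finally show ?thesis by (simp add: c_def)
qed

section \<open>The first eigenvalue as a Rayleigh minimum\<close>

text \<open>Along \<open>h + t r\<close>, with the residual \<open>r = \<Delta>h - \<mu>h\<close>, the nonnegative quantity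
  \<open>energy - \<mu> wnorm_sq\<close> has first-order term \<open>2t wnorm_sq r\<close>, which must therefore vanish.\<close>
lemma rayleigh_minimizer_eigenfunction:
  assumes min: "\<And>g. mean_zero g \<Longrightarrow> \<mu> * wnorm_sq g \<le> energy m1 g"
    and "mean_zero h" and "energy m1 h = \<mu> * wnorm_sq h"
  shows "laplacian E m0 m1 h = (\<lambda>u. \<mu> * h u)"
proof -
  define r where "r = (\<lambda>u. laplacian E m0 m1 h u - \<mu> * h u)"
  have "mean_zero r"
    using \<open>mean_zero h\<close> sum_m0_laplacian[of m1 h]
    by (simp add: mean_zero_def r_def right_diff_distrib sum_subtractf algebra_simps
        sum_distrib_left[symmetric])
  have "energy_form m1 h r - \<mu> * winner h r = winner r r"
    unfolding winner_laplacian[symmetric] winner_def sum_distrib_left sum_subtractf[symmetric]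
    by (intro sum.cong refl) (simp add: r_def algebra_simps)
  then have form_r: "energy_form m1 h r = wnorm_sq r + \<mu> * winner h r"
    by (simp add: winner_self)
  have "0 \<le> 2 * wnorm_sq r * t + (energy m1 r - \<mu> * wnorm_sq r) * t\<^sup>2" for t
  proof -
    have "\<mu> * wnorm_sq (\<lambda>u. h u + t * r u) \<le> energy m1 (\<lambda>u. h u + t * r u)"
      using min mean_zero_add_scaled[OF \<open>mean_zero h\<close> \<open>mean_zero r\<close>] by blast
    then show ?thesis
      using assms(3) by (simp add: energy_add_scaled wnorm_sq_add_scaled form_r algebra_simps)
  qed
  then have "wnorm_sq r = 0"
    using quadratic_nonneg_imp_linear_coeff_0 by (metis mult_eq_0_iff zero_neq_numeral)
  then show ?thesis
    by (simp add: wnorm_sq_eq_0_iff r_def fun_eq_iff)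
qed

lemma bounded_weighted_ball:
  "bounded {x :: 'a::real_normed_vector ^ 'v. (\<Sum>u\<in>UNIV. m0 u * (norm (x $ u))\<^sup>2) \<le> c}"
proof -
  have "norm x \<le> sqrt (\<Sum>u\<in>UNIV. c / m0 u)"
    if x: "(\<Sum>u\<in>UNIV. m0 u * (norm (x $ u))\<^sup>2) \<le> c" for x :: "'a ^ 'v"
  proof -
    have "m0 u * (norm (x $ u))\<^sup>2 \<le> c" for u
      using member_le_sum[of u UNIV "\<lambda>u. m0 u * (norm (x $ u))\<^sup>2"] m0_pos x
      by (simp add: less_imp_le)
    then have "(norm (x $ u))\<^sup>2 \<le> c / m0 u" for u
      using m0_pos[of u] by (simp add: pos_le_divide_eq mult.commute)
    then have "(norm x)\<^sup>2 \<le> (\<Sum>u\<in>UNIV. c / m0 u)"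
      unfolding power2_norm_vec by (rule sum_mono)
    then show ?thesis by (simp add: real_le_rsqrt)
  qed
  then show ?thesis unfolding bounded_iff by blast
qed

lemma wnorm_sq_normalize:
  "f \<noteq> (\<lambda>_. 0) \<Longrightarrow> wnorm_sq (\<lambda>u. f u / sqrt (wnorm_sq f)) = 1"
  using wnorm_sq_scale[of "1 / sqrt (wnorm_sq f)" f] wnorm_sq_nonneg[of f] wnorm_sq_eq_0_iff[of f]
  by (simp add: power_divide)

lemma rayleigh_minimizer_exists:
  assumes nonneg: "\<forall>e\<in>E. 0 \<le> m1 e" and "a \<noteq> (b :: 'v)"
  obtains h where "mean_zero h" "wnorm_sq h = 1"
    "\<And>g. mean_zero g \<Longrightarrow> energy m1 h * wnorm_sq g \<le> energy m1 g"
proof -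
  define S where "S = {x :: real ^ 'v. mean_zero (($) x) \<and> wnorm_sq (($) x) = 1}"
  have "closed S"
    unfolding S_def mean_zero_def wnorm_sq_def
    by (intro closed_Collect_conj closed_Collect_eq continuous_intros)
  moreover have "bounded S"
    by (rule bounded_subset[OF bounded_weighted_ball[where c = 1]])
      (auto simp: S_def wnorm_sq_def)
  ultimately have "compact S"
    by (simp add: compact_eq_bounded_closed)
  have normalized_in_S: "vec_lambda (\<lambda>u. g u / sqrt (wnorm_sq g)) \<in> S"
    if "mean_zero g" "g \<noteq> (\<lambda>_. 0)" for g
    using that wnorm_sq_normalize[of g] mean_zero_scale[of g "1 / sqrt (wnorm_sq g)"]
    by (simp add: S_def vec_lambda_inverse)
  define g0 where "g0 = (\<lambda>u. (if u = a then 1 else 0) - bar m0 (\<lambda>u. if u = a then 1 else (0::real)))"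
  have "g0 a \<noteq> g0 b"
    using \<open>a \<noteq> b\<close> by (simp add: g0_def)
  then have "g0 \<noteq> (\<lambda>_. 0)" by auto
  then have "S \<noteq> {}"
    using normalized_in_S[of g0] mean_zero_centered unfolding g0_def by auto
  have "continuous_on S (\<lambda>x. energy m1 (($) x))"
    unfolding energy_def by (intro continuous_intros) auto
  then obtain x where "x \<in> S" and x_min: "\<And>y. y \<in> S \<Longrightarrow> energy m1 (($) x) \<le> energy m1 (($) y)"
    using continuous_attains_inf[OF \<open>compact S\<close> \<open>S \<noteq> {}\<close>] by blast
  have "energy m1 (($) x) * wnorm_sq g \<le> energy m1 g" if "mean_zero g" for g
  proof (cases "g = (\<lambda>_. 0)")
    case True
    then show ?thesis using energy_nonneg[OF nonneg] by (simp add: wnorm_sq_def)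
  next
    case False
    then have "0 < wnorm_sq g"
      using wnorm_sq_nonneg[of g] wnorm_sq_eq_0_iff[of g] by linarith
    have "energy m1 (($) x) \<le> energy m1 (\<lambda>u. g u / sqrt (wnorm_sq g))"
      using x_min[OF normalized_in_S[OF that False]] by (simp add: vec_lambda_inverse)
    also have "\<dots> = energy m1 g / wnorm_sq g"
      using energy_scale[of m1 "1 / sqrt (wnorm_sq g)" g] \<open>0 < wnorm_sq g\<close>
      by (simp add: power_divide)
    finally show ?thesis
      using \<open>0 < wnorm_sq g\<close> by (simp add: pos_le_divide_eq)
  qed
  with \<open>x \<in> S\<close> show ?thesis
    using that[of "($) x"] by (simp add: S_def)
qed

lemma eigenfunction_mean_zero_energy:
  assumes "laplacian E m0 m1 f = (\<lambda>u. ev * f u)" and "ev \<noteq> 0"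
  shows "mean_zero f" "energy m1 f = ev * wnorm_sq f"
proof -
  have "ev * (\<Sum>u\<in>UNIV. m0 u * f u) = 0"
    using sum_m0_laplacian[of m1 f] assms(1) by (simp add: sum_distrib_left algebra_simps)
  then show "mean_zero f"
    using assms(2) by (simp add: mean_zero_def)
  have "energy m1 f = winner (laplacian E m0 m1 f) f"
    by (simp add: winner_laplacian energy_form_self)
  then show "energy m1 f = ev * wnorm_sq f"
    using assms(1) by (simp add: winner_def wnorm_sq_def sum_distrib_left power2_eq_square algebra_simps)
qed

lemma lambda1_rayleigh:
  assumes nonneg: "\<forall>e\<in>E. 0 \<le> m1 e" and connected: "graph_connected (support_edges E m1)"
    and "a \<noteq> (b :: 'v)"
  shows "0 < lambda1 E m0 m1"
    and "\<And>g. mean_zero g \<Longrightarrow> lambda1 E m0 m1 * wnorm_sq g \<le> energy m1 g" (is "\<And>g. _ \<Longrightarrow> ?rayleigh g")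
    and "\<exists>h. mean_zero h \<and> wnorm_sq h = 1 \<and> energy m1 h = lambda1 E m0 m1" (is ?attained)
proof -
  obtain h where h: "mean_zero h" "wnorm_sq h = 1"
    and h_min: "\<And>g. mean_zero g \<Longrightarrow> energy m1 h * wnorm_sq g \<le> energy m1 g"
    using rayleigh_minimizer_exists[OF nonneg \<open>a \<noteq> b\<close>] by blast
  define \<mu> where "\<mu> = energy m1 h"
  have "\<mu> \<noteq> 0"
  proof
    assume "\<mu> = 0"
    then have const: "h = (\<lambda>_. h a)"
      using energy_eq_0_imp_const[OF nonneg connected] by (auto simp: \<mu>_def)
    have "0 = (\<Sum>u\<in>UNIV. m0 u * h u)"
      using h(1) by (simp add: mean_zero_def)
    also have "\<dots> = total_mass m0 * h a"
      by (subst const) (simp add: total_mass_def sum_distrib_right)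
    finally have "h = (\<lambda>_. 0)"
      using const total_mass_pos by simp
    then show False
      using h(2) by (simp add: wnorm_sq_def)
  qed
  then have "0 < \<mu>"
    using energy_nonneg[OF nonneg, of h] by (simp add: \<mu>_def)
  have "lambda1 E m0 m1 = \<mu>"
    unfolding lambda1_def
  proof (rule cInf_eq_minimum)
    have "laplacian E m0 m1 h = (\<lambda>u. \<mu> * h u)"
      using rayleigh_minimizer_eigenfunction[OF h_min h(1)] h(2) by (simp add: \<mu>_def)
    moreover have "h \<noteq> (\<lambda>_. 0)"
      using h(2) by (auto simp: wnorm_sq_def)
    ultimately show "\<mu> \<in> {ev. ev > 0 \<and> (\<exists>f. f \<noteq> (\<lambda>_. 0) \<and> laplacian E m0 m1 f = (\<lambda>u. ev * f u))}"
      using \<open>0 < \<mu>\<close> by blast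
  next
    fix ev :: real assume "ev \<in> {ev. ev > 0 \<and> (\<exists>f. f \<noteq> (\<lambda>_. 0) \<and> laplacian E m0 m1 f = (\<lambda>u. ev * f u))}"
    then obtain f :: "'v \<Rightarrow> real" where "0 < ev" "f \<noteq> (\<lambda>_. 0)" and eigen: "laplacian E m0 m1 f = (\<lambda>u. ev * f u)"
      by blast
    then have "0 < wnorm_sq f"
      using wnorm_sq_nonneg[of f] wnorm_sq_eq_0_iff[of f] by linarith
    moreover have "\<mu> * wnorm_sq f \<le> ev * wnorm_sq f"
      using h_min eigenfunction_mean_zero_energy[OF eigen] \<open>0 < ev\<close> by (fastforce simp: \<mu>_def)
    ultimately show "\<mu> \<le> ev" by simp
  qed
  then show "0 < lambda1 E m0 m1" and "\<And>g. mean_zero g \<Longrightarrow> ?rayleigh g" and ?attained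
    using \<open>0 < \<mu>\<close> h h_min by (auto simp: \<mu>_def)
qed

lemma lambda1_le_energy_centered:
  assumes "\<forall>e\<in>E. 0 \<le> m1 e" and "graph_connected (support_edges E m1)" and "a \<noteq> (b :: 'v)"
  shows "lambda1 E m0 m1 * wnorm_sq (\<lambda>u. f u - bar m0 f) \<le> energy m1 f"
  using lambda1_rayleigh(2)[OF assms mean_zero_centered[of f]] energy_diff_const[of m1 f] by simp

lemma laplacian_eigen_centered_iff:
  assumes "\<forall>e\<in>E. 0 \<le> m1 e" and "graph_connected (support_edges E m1)" and "a \<noteq> (b :: 'v)"
  shows "laplacian E m0 m1 f = (\<lambda>u. lambda1 E m0 m1 * (f u - bar m0 f)) \<longleftrightarrow>
         energy m1 f = lambda1 E m0 m1 * wnorm_sq (\<lambda>u. f u - bar m0 f)"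
    (is "laplacian E m0 m1 f = (\<lambda>u. ?l * ?h u) \<longleftrightarrow> _")
proof
  assume eigen: "laplacian E m0 m1 f = (\<lambda>u. ?l * ?h u)"
  have "energy m1 f = energy_form m1 f ?h"
    by (simp add: energy_form_diff_const energy_form_self)
  also have "\<dots> = winner (laplacian E m0 m1 f) ?h"
    by (simp add: winner_laplacian)
  also have "\<dots> = ?l * wnorm_sq ?h"
    unfolding eigen by (simp add: winner_def wnorm_sq_def sum_distrib_left power2_eq_square algebra_simps)
  finally show "energy m1 f = ?l * wnorm_sq ?h" .
next
  assume "energy m1 f = ?l * wnorm_sq ?h"
  then have "energy m1 ?h = ?l * wnorm_sq ?h"
    by (simp only: energy_diff_const)
  then have "laplacian E m0 m1 ?h = (\<lambda>u. ?l * ?h u)"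
    using rayleigh_minimizer_eigenfunction[where \<mu> = ?l and h = ?h]
      lambda1_rayleigh(2)[OF assms] mean_zero_centered by blast
  then show "laplacian E m0 m1 f = (\<lambda>u. ?l * ?h u)"
    by (simp add: laplacian_diff_const)
qed

lemma energy_cong: "\<forall>e\<in>E. m1 e = m2 e \<Longrightarrow> energy m1 f = energy m2 f"
  unfolding energy_def adj_def by (intro arg_cong[where f="\<lambda>x. x / 2"] sum.cong) auto

text \<open>A disconnected support would make the indicator of one component a non-constant
  function of zero energy.\<close>
lemma graph_connected_support_if_gap:
  assumes nonneg: "\<forall>e\<in>E. 0 \<le> m1 e" and "0 < \<mu>"
    and gap: "\<And>f. mean_zero f \<Longrightarrow> \<mu> * wnorm_sq f \<le> energy m1 f"
  shows "graph_connected (support_edges E m1)"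
proof (rule ccontr)
  define R where "R = edge_rel (support_edges E m1)"
  assume "\<not> graph_connected (support_edges E m1)"
  then obtain u0 v0 where "(u0, v0) \<notin> R\<^sup>*"
    by (auto simp: graph_connected_def R_def)
  define f where "f u = (if (u0, u) \<in> R\<^sup>* then 1 else (0::real))" for u
  have edge_terms: "adj m1 u v * (f u - f v)\<^sup>2 = 0" for u v
  proof (cases "{u, v} \<in> E \<and> 0 < m1 {u, v}")
    case True
    then have "(u, v) \<in> R" "(v, u) \<in> R"
      by (auto simp: R_def edge_rel_def support_edges_def insert_commute)
    then have "f u = f v"
      unfolding f_def by (meson rtrancl_into_rtrancl)
    then show ?thesis by simp
  next
    case False
    then show ?thesis using nonneg by (auto simp: adj_def)
  qed
  have "energy m1 f = 0"
    by (simp only: energy_def edge_terms sum.neutral_const)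
  define g where "g = (\<lambda>u. f u - bar m0 f)"
  have "\<mu> * wnorm_sq g \<le> 0"
    using gap[OF mean_zero_centered[of f]] energy_diff_const[of m1 f] \<open>energy m1 f = 0\<close>
    by (simp add: g_def)
  then have "g = (\<lambda>_. 0)"
    using \<open>0 < \<mu>\<close> wnorm_sq_nonneg[of g] wnorm_sq_eq_0_iff[of g]
    by (simp add: mult_le_0_iff)
  then have "f u0 = f v0"
    by (simp add: g_def fun_eq_iff)
  then show False
    using \<open>(u0, v0) \<notin> R\<^sup>*\<close> by (simp add: f_def)
qed

lemma bar_mean_zero: "mean_zero f \<Longrightarrow> bar m0 f = 0"
  by (simp add: mean_zero_def bar_real)

lemma continuous_on_energy_weights:
  "continuous_on UNIV (\<lambda>w :: real ^ ('v set). energy (($) w) f)"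
proof -
  have "continuous_on UNIV (\<lambda>w :: real ^ ('v set). adj (($) w) u v)" for u v
    by (cases "{u, v} \<in> E") (simp_all add: adj_def linear_continuous_on bounded_linear_vec_nth)
  then show ?thesis
    unfolding energy_def by (intro continuous_intros) auto
qed

lemma sum_pairs_edges:
  fixes k :: "'v set \<Rightarrow> real"
  shows "(\<Sum>u\<in>UNIV. \<Sum>v\<in>UNIV. if {u, v} \<in> E then k {u, v} else 0) = 2 * (\<Sum>e\<in>E. k e)"
proof -
  define P where "P = {p :: 'v \<times> 'v. {fst p, snd p} \<in> E}"
  have "(\<Sum>u\<in>UNIV. \<Sum>v\<in>UNIV. if {u, v} \<in> E then k {u, v} else 0)
      = (\<Sum>p\<in>UNIV. if {fst p, snd p} \<in> E then k {fst p, snd p} else 0)"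
    by (simp add: sum.cartesian_product split_beta)
  also have "\<dots> = (\<Sum>p\<in>P. k {fst p, snd p})"
    using sum.inter_filter[of UNIV "\<lambda>p. k {fst p, snd p}" "\<lambda>p. {fst p, snd p} \<in> E"]
    by (simp add: P_def)
  also have "\<dots> = (\<Sum>e\<in>E. \<Sum>p\<in>{p\<in>P. {fst p, snd p} = e}. k {fst p, snd p})"
    by (rule sum.group[symmetric]) (auto simp: P_def)
  also have "\<dots> = (\<Sum>e\<in>E. 2 * k e)"
  proof (rule sum.cong[OF refl])
    fix e assume "e \<in> E"
    then obtain x y where e: "e = {x, y}" "x \<noteq> y"
      using simple by (auto simp: simple_graph_def card_2_iff)
    have "{p\<in>P. {fst p, snd p} = e} = {(x, y), (y, x)}"
    proof (rule set_eqI)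
      fix p :: "'v \<times> 'v"
      show "p \<in> {p\<in>P. {fst p, snd p} = e} \<longleftrightarrow> p \<in> {(x, y), (y, x)}"
        using \<open>e \<in> E\<close> doubleton_eq_iff[of "fst p" "snd p" x y]
        unfolding P_def e by (cases p) auto
    qed
    then show "(\<Sum>p\<in>{p\<in>P. {fst p, snd p} = e}. k {fst p, snd p}) = 2 * k e"
      using e by (simp add: insert_commute)
  qed
  finally show ?thesis by (simp add: sum_distrib_left)
qed

lemma sum_pairs_adj:
  fixes k :: "'v set \<Rightarrow> real"
  shows "(\<Sum>u\<in>UNIV. \<Sum>v\<in>UNIV. adj m1 u v * k {u, v}) = 2 * (\<Sum>e\<in>E. m1 e * k e)"
proof -
  have "adj m1 u v * k {u, v} = (if {u, v} \<in> E then m1 {u, v} * k {u, v} else 0)" for u v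
    by (simp add: adj_def)
  then show ?thesis
    using sum_pairs_edges[of "\<lambda>e. m1 e * k e"] by simp
qed

lemma energy_le_sum_weights:
  assumes "\<forall>e\<in>E. 0 \<le> m1 e" and "\<And>u v. (f u - f v)\<^sup>2 \<le> 1"
  shows "energy m1 f \<le> (\<Sum>e\<in>E. m1 e)"
proof -
  have "(\<Sum>u\<in>UNIV. \<Sum>v\<in>UNIV. adj m1 u v * (f u - f v)\<^sup>2) \<le> (\<Sum>u\<in>UNIV. \<Sum>v\<in>UNIV. adj m1 u v * 1)"
    using adj_nonneg[OF assms(1)] assms(2) by (intro sum_mono mult_left_mono)
  also have "\<dots> = 2 * (\<Sum>e\<in>E. m1 e)"
    using sum_pairs_adj[of m1 "\<lambda>_. 1"] by simp
  finally show ?thesis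
    by (simp add: energy_def)
qed

definition vec_energy :: "('v set \<Rightarrow> real) \<Rightarrow> ('v \<Rightarrow> real ^ 'n) \<Rightarrow> real" where
  "vec_energy m1 \<phi> = (\<Sum>u\<in>UNIV. \<Sum>v\<in>UNIV. adj m1 u v * (norm (\<phi> u - \<phi> v))\<^sup>2) / 2"

lemma sum_energy_components:
  "(\<Sum>i\<in>UNIV. energy m1 (\<lambda>u. \<phi> u $ i)) = vec_energy m1 \<phi>"
proof -
  have "(\<Sum>i\<in>UNIV. \<Sum>u\<in>UNIV. \<Sum>v\<in>UNIV. adj m1 u v * (\<phi> u $ i - \<phi> v $ i)\<^sup>2)
      = (\<Sum>u\<in>UNIV. \<Sum>i\<in>UNIV. \<Sum>v\<in>UNIV. adj m1 u v * (\<phi> u $ i - \<phi> v $ i)\<^sup>2)"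
    by (rule sum.swap)
  also have "\<dots> = (\<Sum>u\<in>UNIV. \<Sum>v\<in>UNIV. \<Sum>i\<in>UNIV. adj m1 u v * (\<phi> u $ i - \<phi> v $ i)\<^sup>2)"
    by (intro sum.cong refl sum.swap)
  finally show ?thesis
    by (simp add: energy_def vec_energy_def sum_divide_distrib[symmetric] power2_norm_vec
        sum_distrib_left)
qed

lemma vec_energy_slack:
  "(\<Sum>e\<in>E. m1 e * (d e)\<^sup>2) - vec_energy m1 \<phi>
     = (\<Sum>u\<in>UNIV. \<Sum>v\<in>UNIV. adj m1 u v * ((d {u, v})\<^sup>2 - (norm (\<phi> u - \<phi> v))\<^sup>2)) / 2"
  using sum_pairs_adj[of m1 "\<lambda>e. (d e)\<^sup>2"]
  by (simp add: vec_energy_def right_diff_distrib sum_subtractf diff_divide_distrib)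

lemma vec_energy_le:
  assumes "\<forall>e\<in>E. 0 \<le> m1 e" and "\<forall>u v. {u, v} \<in> E \<longrightarrow> norm (\<phi> u - \<phi> v) \<le> d {u, v}"
  shows "vec_energy m1 \<phi> \<le> (\<Sum>e\<in>E. m1 e * (d e)\<^sup>2)"
    and "vec_energy m1 \<phi> = (\<Sum>e\<in>E. m1 e * (d e)\<^sup>2) \<longleftrightarrow>
         (\<forall>u v. {u, v} \<in> E \<longrightarrow> m1 {u, v} * ((d {u, v})\<^sup>2 - (norm (\<phi> u - \<phi> v))\<^sup>2) = 0)"
proof -
  define slack where "slack u v = adj m1 u v * ((d {u, v})\<^sup>2 - (norm (\<phi> u - \<phi> v))\<^sup>2)" for u v
  have slack_nonneg: "0 \<le> slack u v" for u v
  proof (cases "{u, v} \<in> E")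
    case True
    then have "(norm (\<phi> u - \<phi> v))\<^sup>2 \<le> (d {u, v})\<^sup>2"
      using assms(2) by (auto intro: power_mono)
    then show ?thesis using adj_nonneg[OF assms(1), of u v] by (simp add: slack_def)
  qed (simp add: slack_def adj_def)
  have slack_sum: "(\<Sum>e\<in>E. m1 e * (d e)\<^sup>2) - vec_energy m1 \<phi> = (\<Sum>u\<in>UNIV. \<Sum>v\<in>UNIV. slack u v) / 2"
    unfolding slack_def by (rule vec_energy_slack)
  then show "vec_energy m1 \<phi> \<le> (\<Sum>e\<in>E. m1 e * (d e)\<^sup>2)"
    using slack_nonneg by (smt (verit) sum_nonneg divide_nonneg_pos)
  have "vec_energy m1 \<phi> = (\<Sum>e\<in>E. m1 e * (d e)\<^sup>2) \<longleftrightarrow> (\<Sum>u\<in>UNIV. \<Sum>v\<in>UNIV. slack u v) = 0"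
    using slack_sum by auto
  also have "\<dots> \<longleftrightarrow> (\<forall>u v. slack u v = 0)"
    by (simp add: sum_nonneg_eq_0_iff sum_nonneg slack_nonneg)
  finally show "vec_energy m1 \<phi> = (\<Sum>e\<in>E. m1 e * (d e)\<^sup>2) \<longleftrightarrow>
         (\<forall>u v. {u, v} \<in> E \<longrightarrow> m1 {u, v} * ((d {u, v})\<^sup>2 - (norm (\<phi> u - \<phi> v))\<^sup>2) = 0)"
    by (simp add: slack_def adj_def)
qed

lemma bar_component: "bar m0 \<phi> $ i = bar m0 (\<lambda>u. \<phi> u $ i)"
  by (simp add: bar_def sum_component)

lemma laplacian_component: "laplacian E m0 m1 \<phi> u $ i = laplacian E m0 m1 (\<lambda>v. \<phi> v $ i) u"
  by (simp add: laplacian_adj sum_component)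

lemma sum_wnorm_sq_centered_components:
  "(\<Sum>i\<in>UNIV. wnorm_sq (\<lambda>u. \<phi> u $ i - bar m0 \<phi> $ i))
     = (\<Sum>u\<in>UNIV. m0 u * (norm (\<phi> u))\<^sup>2) - total_mass m0 * (norm (bar m0 \<phi>))\<^sup>2"
proof -
  have "(\<Sum>i\<in>UNIV. \<Sum>u\<in>UNIV. m0 u * (\<phi> u $ i)\<^sup>2) = (\<Sum>u\<in>UNIV. m0 u * (norm (\<phi> u))\<^sup>2)"
    by (subst sum.swap) (simp add: power2_norm_vec sum_distrib_left)
  then show ?thesis
    by (simp add: bar_component wnorm_sq_centered sum_subtractf wnorm_sq_def power2_norm_vec
        sum_distrib_left)
qed

lemma laplacian_vec_eigen_iff:
  assumes "\<forall>e\<in>E. 0 \<le> m1 e" and "graph_connected (support_edges E m1)" and "a \<noteq> (b :: 'v)"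
  shows "(\<forall>u. laplacian E m0 m1 \<phi> u = lambda1 E m0 m1 *\<^sub>R (\<phi> u - bar m0 \<phi>)) \<longleftrightarrow>
         (\<forall>i. energy m1 (\<lambda>u. \<phi> u $ i) = lambda1 E m0 m1 * wnorm_sq (\<lambda>u. \<phi> u $ i - bar m0 \<phi> $ i))"
  unfolding bar_component laplacian_eigen_centered_iff[OF assms, symmetric]
  by (auto simp: vec_eq_iff fun_eq_iff laplacian_component bar_component)

lemma axis_map_admissible:
  "\<forall>e\<in>E. 0 \<le> d e \<Longrightarrow> admissible_map E m0 d (\<lambda>_. axis a 1)"
  by (auto simp: admissible_map_def norm_axis_1 total_mass_def)

text \<open>With a single vertex \<open>lambda1\<close> is the junk value \<open>Inf {}\<close>; the theorem holds anyway,
  because \<open>E = {}\<close> and every admissible map is a constant of norm 1.\<close>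
lemma single_vertex:
  assumes single: "\<And>a b :: 'v. a = b"
  shows "Dsq E d = 0" and "delta E m0 d = 1" and "\<exists>m1 \<phi>. extremal_pair E m0 d m1 \<phi>"
proof -
  fix x :: 'v
  have UNIV_eq: "UNIV = {x}"
    using single by auto
  have "E = {}"
    using simple single by (fastforce simp: simple_graph_def card_2_iff)
  then show "Dsq E d = 0"
    by (simp add: Dsq_def)
  have bar_eq: "bar m0 \<phi> = \<phi> x" for \<phi> :: "'v \<Rightarrow> real ^ 'v"
    using m0_pos[of x] by (simp add: bar_def total_mass_def UNIV_eq)
  have "(norm (bar m0 \<phi>))\<^sup>2 = 1" if "admissible_map E m0 d \<phi>" for \<phi>
    using that m0_pos[of x] by (simp add: admissible_map_def total_mass_def UNIV_eq bar_eq)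
  moreover have \<phi>: "admissible_map E m0 d (\<lambda>_. axis x 1)"
    using axis_map_admissible \<open>E = {}\<close> by blast
  ultimately have "{(norm (bar m0 \<phi>))\<^sup>2 | \<phi>. admissible_map E m0 d \<phi>} = {1}"
    by (auto intro!: exI[of _ "\<lambda>_. axis x 1"])
  then show "delta E m0 d = 1"
    by (simp add: delta_def)
  have "admissible_weight E d (\<lambda>_. 1)"
    using single \<open>E = {}\<close>
    by (simp add: admissible_weight_def graph_connected_def Dsq_def) (metis rtrancl.rtrancl_refl)
  with \<phi> show "\<exists>m1 \<phi>. extremal_pair E m0 d m1 \<phi>"
    unfolding extremal_pair_def using \<open>E = {}\<close> by (force simp: laplacian_def bar_eq)
qed

end

section \<open>The extremal problems \<open>\<delta>\<close> and \<open>\<sigma>\<close>\<close>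

locale distance_graph = vertex_weighted_graph E m0 for E :: "'v::finite set set" and m0 +
  fixes d :: "'v set \<Rightarrow> real"
  assumes connected: "graph_connected E" and d_pos: "\<forall>e\<in>E. 0 < d e"
    and nontrivial: "\<exists>a b :: 'v. a \<noteq> b"
begin

lemma edges_nonempty: "E \<noteq> {}"
proof -
  obtain a b :: 'v where "a \<noteq> b"
    using nontrivial by blast
  have "(a, b) \<in> (edge_rel E)\<^sup>*"
    using connected by (simp add: graph_connected_def)
  then obtain y where "(a, y) \<in> edge_rel E"
    using \<open>a \<noteq> b\<close> by (cases rule: converse_rtranclE) auto
  then show ?thesis by (auto simp: edge_rel_def)
qed

lemma Dsq_pos: "0 < Dsq E d"
  unfolding Dsq_def using edges_nonempty d_pos by (intro sum_pos) auto

lemma lambda1_admissible: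
  assumes "admissible_weight E d m1"
  shows "0 < lambda1 E m0 m1"
    and "lambda1 E m0 m1 * wnorm_sq (\<lambda>u. f u - bar m0 f) \<le> energy m1 f" (is ?rayleigh)
    and "\<exists>h. mean_zero h \<and> wnorm_sq h = 1 \<and> energy m1 h = lambda1 E m0 m1" (is ?attained)
    and "(\<forall>u. laplacian E m0 m1 \<phi> u = lambda1 E m0 m1 *\<^sub>R (\<phi> u - bar m0 \<phi>)) \<longleftrightarrow>
         (\<forall>i. energy m1 (\<lambda>u. \<phi> u $ i) = lambda1 E m0 m1 * wnorm_sq (\<lambda>u. \<phi> u $ i - bar m0 \<phi> $ i))"
      (is ?eigen)
proof -
  obtain a b :: 'v where "a \<noteq> b"
    using nontrivial by blast
  moreover have "\<forall>e\<in>E. 0 \<le> m1 e" "graph_connected (support_edges E m1)"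
    using assms by (auto simp: admissible_weight_def)
  ultimately show "0 < lambda1 E m0 m1" and ?rayleigh and ?attained and ?eigen
    using lambda1_rayleigh(1,3) lambda1_le_energy_centered laplacian_vec_eigen_iff by blast+
qed

lemma sum_weights_le: "admissible_weight E d m1 \<Longrightarrow> (\<Sum>e\<in>E. m1 e) \<le> Dsq E d * (\<Sum>e\<in>E. 1 / (d e)\<^sup>2)"
proof -
  assume adm: "admissible_weight E d m1"
  have "m1 e \<le> m1 e * (d e)\<^sup>2 * (\<Sum>e\<in>E. 1 / (d e)\<^sup>2)" if "e \<in> E" for e
  proof -
    have "1 / (d e)\<^sup>2 \<le> (\<Sum>e\<in>E. 1 / (d e)\<^sup>2)"
      using d_pos that by (intro member_le_sum) auto
    moreover have "0 \<le> m1 e * (d e)\<^sup>2" "0 < d e"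
      using adm d_pos that by (auto simp: admissible_weight_def)
    ultimately show ?thesis
      using mult_left_mono[of "1 / (d e)\<^sup>2" _ "m1 e * (d e)\<^sup>2"] by simp
  qed
  then have "(\<Sum>e\<in>E. m1 e) \<le> (\<Sum>e\<in>E. m1 e * (d e)\<^sup>2 * (\<Sum>e\<in>E. 1 / (d e)\<^sup>2))"
    by (rule sum_mono)
  also have "\<dots> = Dsq E d * (\<Sum>e\<in>E. 1 / (d e)\<^sup>2)"
    using adm by (simp add: admissible_weight_def sum_distrib_right[symmetric])
  finally show ?thesis .
qed

lemma bdd_above_lambda1: "bdd_above {lambda1 E m0 m1 | m1. admissible_weight E d m1}"
proof -
  obtain a b :: 'v where "a \<noteq> b"
    using nontrivial by blast
  define f where "f u = (if u = a then 1 else 0 :: real)" for u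
  have "f a - bar m0 f \<noteq> f b - bar m0 f"
    using \<open>a \<noteq> b\<close> by (simp add: f_def)
  then have "0 < wnorm_sq (\<lambda>u. f u - bar m0 f)"
    using wnorm_sq_nonneg wnorm_sq_eq_0_iff by (metis less_eq_real_def)
  moreover have "lambda1 E m0 m1 * wnorm_sq (\<lambda>u. f u - bar m0 f) \<le> Dsq E d * (\<Sum>e\<in>E. 1 / (d e)\<^sup>2)"
    if adm: "admissible_weight E d m1" for m1
  proof -
    have "lambda1 E m0 m1 * wnorm_sq (\<lambda>u. f u - bar m0 f) \<le> energy m1 f"
      by (rule lambda1_admissible(2)[OF adm])
    also have "\<dots> \<le> (\<Sum>e\<in>E. m1 e)"
      using adm by (intro energy_le_sum_weights) (auto simp: admissible_weight_def f_def)
    also have "\<dots> \<le> Dsq E d * (\<Sum>e\<in>E. 1 / (d e)\<^sup>2)"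
      by (rule sum_weights_le[OF adm])
    finally show ?thesis .
  qed
  ultimately show ?thesis
    unfolding bdd_above_def by (auto simp: pos_le_divide_eq[symmetric])
qed

lemma unit_weight_admissible: "admissible_weight E d (\<lambda>_. 1)"
  by (simp add: admissible_weight_def support_edges_def Dsq_def connected)

lemma lambda1_le_sigma: "admissible_weight E d m1 \<Longrightarrow> lambda1 E m0 m1 \<le> sigma E m0 d"
  unfolding sigma_def by (rule cSup_upper[OF _ bdd_above_lambda1]) auto

lemma sigma_le:
  "(\<And>m1. admissible_weight E d m1 \<Longrightarrow> lambda1 E m0 m1 \<le> c) \<Longrightarrow> sigma E m0 d \<le> c"
  unfolding sigma_def using unit_weight_admissible by (intro cSup_least) auto

lemma sigma_pos: "0 < sigma E m0 d"
  using lambda1_admissible(1)[OF unit_weight_admissible] lambda1_le_sigma[OF unit_weight_admissible]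
  by linarith

lemma lambda1_variance_le_Dsq:
  assumes m1: "admissible_weight E d m1" and \<phi>: "admissible_map E m0 d \<phi>"
  shows "lambda1 E m0 m1 * (total_mass m0 * (1 - (norm (bar m0 \<phi>))\<^sup>2)) \<le> Dsq E d" (is ?le)
    and "lambda1 E m0 m1 * (total_mass m0 * (1 - (norm (bar m0 \<phi>))\<^sup>2)) = Dsq E d \<longleftrightarrow>
         (\<forall>u v. {u, v} \<in> E \<longrightarrow> m1 {u, v} * ((d {u, v})\<^sup>2 - (norm (\<phi> u - \<phi> v))\<^sup>2) = 0) \<and>
         (\<forall>u. laplacian E m0 m1 \<phi> u = lambda1 E m0 m1 *\<^sub>R (\<phi> u - bar m0 \<phi>))" (is ?eq_iff)
proof -
  define lam where "lam = lambda1 E m0 m1"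
  define gap where
    "gap i = energy m1 (\<lambda>u. \<phi> u $ i) - lam * wnorm_sq (\<lambda>u. \<phi> u $ i - bar m0 \<phi> $ i)" for i
  have gap_nonneg: "0 \<le> gap i" for i
    using lambda1_admissible(2)[OF m1] by (simp add: gap_def lam_def bar_component)
  have "total_mass m0 * (1 - (norm (bar m0 \<phi>))\<^sup>2) = (\<Sum>i\<in>UNIV. wnorm_sq (\<lambda>u. \<phi> u $ i - bar m0 \<phi> $ i))"
    using sum_wnorm_sq_centered_components[of \<phi>] \<phi> by (simp add: admissible_map_def algebra_simps)
  then have decomp: "lam * (total_mass m0 * (1 - (norm (bar m0 \<phi>))\<^sup>2)) = vec_energy m1 \<phi> - (\<Sum>i\<in>UNIV. gap i)"
    by (simp add: gap_def sum_subtractf sum_distrib_left sum_energy_components)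
  have "vec_energy m1 \<phi> \<le> Dsq E d"
    and tight_iff: "vec_energy m1 \<phi> = Dsq E d \<longleftrightarrow>
         (\<forall>u v. {u, v} \<in> E \<longrightarrow> m1 {u, v} * ((d {u, v})\<^sup>2 - (norm (\<phi> u - \<phi> v))\<^sup>2) = 0)"
    using vec_energy_le[of m1 \<phi> d] m1 \<phi> by (simp_all add: admissible_weight_def admissible_map_def)
  moreover have eigen_iff: "(\<Sum>i\<in>UNIV. gap i) = 0 \<longleftrightarrow>
      (\<forall>u. laplacian E m0 m1 \<phi> u = lam *\<^sub>R (\<phi> u - bar m0 \<phi>))"
    using lambda1_admissible(4)[OF m1, of \<phi>] gap_nonneg
    by (simp add: sum_nonneg_eq_0_iff gap_def lam_def)
  moreover have "0 \<le> (\<Sum>i\<in>UNIV. gap i)"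
    using gap_nonneg by (simp add: sum_nonneg)
  ultimately show ?le and ?eq_iff
    unfolding lam_def[symmetric] decomp tight_iff[symmetric] eigen_iff[symmetric] by linarith+
qed

lemma sigma_variance_le_Dsq:
  assumes "admissible_map E m0 d \<phi>"
  shows "sigma E m0 d * (total_mass m0 * (1 - (norm (bar m0 \<phi>))\<^sup>2)) \<le> Dsq E d"
proof -
  define V where "V = total_mass m0 * (1 - (norm (bar m0 \<phi>))\<^sup>2)"
  show ?thesis
  proof (cases "0 < V")
    case True
    have "lambda1 E m0 m1 \<le> Dsq E d / V" if "admissible_weight E d m1" for m1
      using lambda1_variance_le_Dsq(1)[OF that assms] True by (simp add: V_def pos_le_divide_eq)
    then have "sigma E m0 d \<le> Dsq E d / V"
      by (rule sigma_le)
    then show ?thesis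
      using True by (simp add: V_def pos_le_divide_eq)
  next
    case False
    then have "sigma E m0 d * V \<le> 0"
      using sigma_pos by (simp add: mult_nonneg_nonpos)
    then show ?thesis
      using Dsq_pos by (simp add: V_def)
  qed
qed

lemma bound_le_iff:
  "1 - (Dsq E d / total_mass m0) / sigma E m0 d \<le> x \<longleftrightarrow>
   sigma E m0 d * (total_mass m0 * (1 - x)) \<le> Dsq E d"
  using sigma_pos total_mass_pos by (auto simp: field_simps)

lemma bound_eq_iff:
  "1 - (Dsq E d / total_mass m0) / sigma E m0 d = x \<longleftrightarrow>
   sigma E m0 d * (total_mass m0 * (1 - x)) = Dsq E d"
  using sigma_pos total_mass_pos by (auto simp: field_simps)

lemma delta_le: "admissible_map E m0 d \<phi> \<Longrightarrow> delta E m0 d \<le> (norm (bar m0 \<phi>))\<^sup>2"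
  unfolding delta_def by (rule cInf_lower) (auto intro: bdd_belowI[where m = 0])

lemma bound_le_delta: "1 - (Dsq E d / total_mass m0) / sigma E m0 d \<le> delta E m0 d"
  unfolding delta_def
proof (rule cInf_greatest)
  show "{(norm (bar m0 \<phi>))\<^sup>2 | \<phi>. admissible_map E m0 d \<phi>} \<noteq> {}"
    using axis_map_admissible[of d] d_pos by (auto simp: less_imp_le)
qed (use bound_le_iff sigma_variance_le_Dsq in blast)

lemma delta_attained:
  obtains \<phi> where "admissible_map E m0 d \<phi>" "delta E m0 d = (norm (bar m0 \<phi>))\<^sup>2"
proof -
  define T where "T = {\<Phi> :: real ^ 'v ^ 'v. admissible_map E m0 d (($) \<Phi>)}"
  have "closed {\<Phi> :: real ^ 'v ^ 'v. (\<Sum>u\<in>UNIV. m0 u * (norm (\<Phi> $ u))\<^sup>2) = total_mass m0}"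
    by (intro closed_Collect_eq continuous_intros)
  moreover have "closed {\<Phi> :: real ^ 'v ^ 'v. \<forall>u v. {u, v} \<in> E \<longrightarrow> norm (\<Phi> $ u - \<Phi> $ v) \<le> d {u, v}}"
    by (intro closed_Collect_all closed_Collect_imp open_Collect_const closed_Collect_le continuous_intros)
  ultimately have "closed T"
    unfolding T_def admissible_map_def by (simp add: Collect_conj_eq closed_Int)
  moreover have "bounded T"
    by (rule bounded_subset[OF bounded_weighted_ball[where c = "total_mass m0"]])
      (auto simp: T_def admissible_map_def)
  ultimately have "compact T"
    by (simp add: compact_eq_bounded_closed)
  moreover have "vec_lambda (\<lambda>_. axis a 1) \<in> T" for a
    using axis_map_admissible[of d] d_pos by (simp add: T_def vec_lambda_inverse less_imp_le)
  then have "T \<noteq> {}" by blast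
  moreover have "continuous_on T (\<lambda>\<Phi>. (norm (bar m0 (($) \<Phi>)))\<^sup>2)"
    unfolding bar_def by (intro continuous_intros)
  ultimately obtain \<Phi> where "\<Phi> \<in> T"
    and \<Phi>_min: "\<And>\<Psi>. \<Psi> \<in> T \<Longrightarrow> (norm (bar m0 (($) \<Phi>)))\<^sup>2 \<le> (norm (bar m0 (($) \<Psi>)))\<^sup>2"
    by (metis continuous_attains_inf)
  have "(norm (bar m0 (($) \<Phi>)))\<^sup>2 \<le> (norm (bar m0 \<phi>))\<^sup>2" if "admissible_map E m0 d \<phi>" for \<phi>
    using \<Phi>_min[of "vec_lambda \<phi>"] that by (simp add: T_def vec_lambda_inverse)
  then have "delta E m0 d = (norm (bar m0 (($) \<Phi>)))\<^sup>2"
    unfolding delta_def using \<open>\<Phi> \<in> T\<close> by (intro cInf_eq_minimum) (auto simp: T_def)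
  with \<open>\<Phi> \<in> T\<close> show ?thesis
    using that by (simp add: T_def)
qed


text \<open>Connectedness of the support is not a closed condition, but for \<open>c > 0\<close> it is implied
  by the gap, so these compact sets can replace the set of admissible weights.\<close>
definition gap_weights :: "real \<Rightarrow> (real ^ ('v set)) set" where
  "gap_weights c = {w. (\<forall>e. e \<in> E \<longrightarrow> 0 \<le> w $ e) \<and> (\<forall>e. e \<notin> E \<longrightarrow> w $ e = 0) \<and>
     (\<Sum>e\<in>E. w $ e * (d e)\<^sup>2) = Dsq E d \<and>
     (\<forall>f. mean_zero f \<longrightarrow> c * wnorm_sq f \<le> energy (($) w) f)}"

lemma compact_gap_weights: "compact (gap_weights c)"
proof -
  have "closed (gap_weights c)"
    unfolding gap_weights_def
    by (intro closed_Collect_conj closed_Collect_all closed_Collect_imp open_Collect_const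
        closed_Collect_le closed_Collect_eq continuous_intros continuous_on_energy_weights)
  moreover have "gap_weights c \<subseteq> cbox 0 (\<chi> e. if e \<in> E then Dsq E d / (d e)\<^sup>2 else 0)"
  proof
    fix w assume w: "w \<in> gap_weights c"
    have "w $ e \<le> Dsq E d / (d e)\<^sup>2" if "e \<in> E" for e
    proof -
      have "w $ e * (d e)\<^sup>2 \<le> (\<Sum>e\<in>E. w $ e * (d e)\<^sup>2)"
        using w that by (intro member_le_sum) (auto simp: gap_weights_def)
      moreover have "0 < (d e)\<^sup>2"
        using that d_pos by auto
      ultimately show ?thesis
        using w by (simp add: gap_weights_def pos_le_divide_eq)
    qed
    then show "w \<in> cbox 0 (\<chi> e. if e \<in> E then Dsq E d / (d e)\<^sup>2 else 0)"
      using w by (simp add: mem_box_cart gap_weights_def)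
  qed
  then have "bounded (gap_weights c)"
    using bounded_cbox bounded_subset by blast
  ultimately show ?thesis
    by (simp add: compact_eq_bounded_closed)
qed

lemma gap_weights_antimono: "c \<le> c' \<Longrightarrow> gap_weights c' \<subseteq> gap_weights c"
  unfolding gap_weights_def using wnorm_sq_nonneg
  by (auto intro: order_trans[OF mult_right_mono])

lemma admissible_weight_in_gap_weights:
  assumes "admissible_weight E d m1"
  shows "(\<chi> e. if e \<in> E then m1 e else 0) \<in> gap_weights (lambda1 E m0 m1)"
proof -
  have "lambda1 E m0 m1 * wnorm_sq f \<le> energy m1 f" if "mean_zero f" for f
    using lambda1_admissible(2)[OF assms, of f] bar_mean_zero[OF that] by simp
  moreover have "energy m1 f = energy (($) (\<chi> e. if e \<in> E then m1 e else 0)) f" for f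
    by (rule energy_cong) simp
  ultimately show ?thesis
    using assms by (simp add: gap_weights_def admissible_weight_def)
qed

lemma gap_weights_nonempty: "c < sigma E m0 d \<Longrightarrow> gap_weights c \<noteq> {}"
proof -
  assume "c < sigma E m0 d"
  then obtain m1 where m1: "admissible_weight E d m1" and "c < lambda1 E m0 m1"
    unfolding sigma_def using less_cSup_iff[OF _ bdd_above_lambda1] unit_weight_admissible by blast
  then have "gap_weights (lambda1 E m0 m1) \<subseteq> gap_weights c"
    by (intro gap_weights_antimono) simp
  then show ?thesis
    using admissible_weight_in_gap_weights[OF m1] by blast
qed

lemma gap_weights_limit: "(\<And>c'. c' < c \<Longrightarrow> w \<in> gap_weights c') \<Longrightarrow> w \<in> gap_weights c"
proof -
  assume below: "\<And>c'. c' < c \<Longrightarrow> w \<in> gap_weights c'"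
  have "c * wnorm_sq f \<le> energy (($) w) f" if "mean_zero f" for f
  proof (cases "f = (\<lambda>_. 0)")
    case False
    then have "0 < wnorm_sq f"
      using wnorm_sq_nonneg wnorm_sq_eq_0_iff by (metis less_eq_real_def)
    have "c' \<le> energy (($) w) f / wnorm_sq f" if "c' < c" for c'
      using below[OF that] \<open>mean_zero f\<close> \<open>0 < wnorm_sq f\<close>
      by (simp add: gap_weights_def pos_le_divide_eq)
    then have "c \<le> energy (($) w) f / wnorm_sq f"
      by (rule dense_le)
    then show ?thesis
      using \<open>0 < wnorm_sq f\<close> by (simp add: pos_le_divide_eq)
  qed (simp add: wnorm_sq_def energy_def)
  moreover have "w \<in> gap_weights (c - 1)"
    using below by simp
  ultimately show "w \<in> gap_weights c"
    by (simp add: gap_weights_def)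
qed

lemma gap_weights_admissible:
  assumes "w \<in> gap_weights c" and "0 < c"
  shows "admissible_weight E d (($) w)" and "c \<le> lambda1 E m0 (($) w)"
proof -
  have nonneg: "\<forall>e\<in>E. 0 \<le> w $ e"
    and gap: "\<And>f. mean_zero f \<Longrightarrow> c * wnorm_sq f \<le> energy (($) w) f"
    using assms(1) by (auto simp: gap_weights_def)
  then have "graph_connected (support_edges E (($) w))"
    using graph_connected_support_if_gap \<open>0 < c\<close> by blast
  with assms(1) show adm: "admissible_weight E d (($) w)"
    by (simp add: admissible_weight_def gap_weights_def)
  obtain h where "mean_zero h" "wnorm_sq h = 1" "energy (($) w) h = lambda1 E m0 (($) w)"
    using lambda1_admissible(3)[OF adm] by blast
  then show "c \<le> lambda1 E m0 (($) w)"
    using gap by fastforce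
qed

lemma sigma_attained:
  obtains ms where "admissible_weight E d ms" "lambda1 E m0 ms = sigma E m0 d"
proof -
  define F where "F n = gap_weights (sigma E m0 d - inverse (Suc n))" for n :: nat
  have "\<Inter> (range F) \<noteq> {}"
    using compact_gap_weights gap_weights_nonempty gap_weights_antimono
    by (intro compact_nest) (auto simp: F_def)
  then obtain w where w: "\<And>n. w \<in> F n"
    by blast
  have "w \<in> gap_weights (sigma E m0 d)"
  proof (rule gap_weights_limit)
    fix c assume "c < sigma E m0 d"
    then obtain n where "inverse (Suc n) < sigma E m0 d - c"
      using reals_Archimedean by (metis diff_gt_0_iff_gt)
    then have "c \<le> sigma E m0 d - inverse (Suc n)"
      by linarith
    then show "w \<in> gap_weights c"
      using w[of n] gap_weights_antimono unfolding F_def by blast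
  qed
  then have "admissible_weight E d (($) w)" "sigma E m0 d \<le> lambda1 E m0 (($) w)"
    using gap_weights_admissible sigma_pos by blast+
  then show ?thesis
    using that lambda1_le_sigma by fastforce
qed

lemma delta_eq_bound_iff:
  "delta E m0 d = 1 - (Dsq E d / total_mass m0) / sigma E m0 d \<longleftrightarrow>
   (\<exists>m1 \<phi>. extremal_pair E m0 d m1 \<phi>)"
proof
  assume eq: "delta E m0 d = 1 - (Dsq E d / total_mass m0) / sigma E m0 d"
  obtain \<phi> where \<phi>: "admissible_map E m0 d \<phi>" and "delta E m0 d = (norm (bar m0 \<phi>))\<^sup>2"
    using delta_attained by blast
  with eq have "sigma E m0 d * (total_mass m0 * (1 - (norm (bar m0 \<phi>))\<^sup>2)) = Dsq E d"
    using bound_eq_iff by metis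
  moreover obtain ms where ms: "admissible_weight E d ms" and "lambda1 E m0 ms = sigma E m0 d"
    using sigma_attained by blast
  ultimately have "lambda1 E m0 ms * (total_mass m0 * (1 - (norm (bar m0 \<phi>))\<^sup>2)) = Dsq E d"
    by simp
  then show "\<exists>m1 \<phi>. extremal_pair E m0 d m1 \<phi>"
    using lambda1_variance_le_Dsq(2)[OF ms \<phi>] ms \<phi> unfolding extremal_pair_def by blast
next
  assume "\<exists>m1 \<phi>. extremal_pair E m0 d m1 \<phi>"
  then obtain m1 \<phi> where m1: "admissible_weight E d m1" and \<phi>: "admissible_map E m0 d \<phi>"
    and "lambda1 E m0 m1 * (total_mass m0 * (1 - (norm (bar m0 \<phi>))\<^sup>2)) = Dsq E d"
    using lambda1_variance_le_Dsq(2) unfolding extremal_pair_def by blast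
  moreover have "lambda1 E m0 m1 \<le> sigma E m0 d" "0 < lambda1 E m0 m1"
    using lambda1_le_sigma[OF m1] lambda1_admissible(1)[OF m1] .
  ultimately have "Dsq E d \<le> sigma E m0 d * (total_mass m0 * (1 - (norm (bar m0 \<phi>))\<^sup>2))"
    using Dsq_pos by (metis mult_right_mono zero_less_mult_pos less_eq_real_def)
  then have "sigma E m0 d * (total_mass m0 * (1 - (norm (bar m0 \<phi>))\<^sup>2)) = Dsq E d"
    using sigma_variance_le_Dsq[OF \<phi>] by linarith
  then have "1 - (Dsq E d / total_mass m0) / sigma E m0 d = (norm (bar m0 \<phi>))\<^sup>2"
    unfolding bound_eq_iff .
  then show "delta E m0 d = 1 - (Dsq E d / total_mass m0) / sigma E m0 d"
    using delta_le[OF \<phi>] bound_le_delta by linarith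
qed

end

theorem corollary1p6:
  fixes E :: "'v::finite set set"
    and m0 :: "'v \<Rightarrow> real"
    and d :: "'v set \<Rightarrow> real"
  assumes "simple_graph E"
    and "graph_connected E"
    and "\<forall>u. m0 u > 0"
    and "\<forall>e\<in>E. d e > 0"
  shows "delta E m0 d \<ge> 1 - (Dsq E d / total_mass m0) / sigma E m0 d \<and>
         (delta E m0 d = 1 - (Dsq E d / total_mass m0) / sigma E m0 d \<longleftrightarrow>
         (\<exists>m1 \<phi>. admissible_weight E d m1 \<and> admissible_map E m0 d \<phi> \<and>
            (\<forall>u v. {u, v} \<in> E \<longrightarrow>
                m1 {u, v} * ((d {u, v})\<^sup>2 - (norm (\<phi> u - \<phi> v))\<^sup>2) = 0) \<and>
            (\<forall>u. laplacian E m0 m1 \<phi> u = lambda1 E m0 m1 *\<^sub>R (\<phi> u - bar m0 \<phi>))))"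
proof (cases "\<exists>a b :: 'v. a \<noteq> b")
  case True
  then interpret distance_graph E m0 d
    using assms by unfold_locales auto
  show ?thesis
    using bound_le_delta delta_eq_bound_iff unfolding extremal_pair_def by blast
next
  case False
  then interpret vertex_weighted_graph E m0
    using assms by unfold_locales auto
  show ?thesis
    using single_vertex[of d] False unfolding extremal_pair_def by auto
qed

end
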